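(* Let $p$ be a prime, $n\ge1$, $\mathbb{F}=\mathbb{F}_{p^n}$, $F=p^n$, and $g:\mathbb{F}\to[0,1]$. Let $k\ge 2$ be an integer, let $n'$ be an integer with $$1+\frac{\log\binom{k}{2}}{\log p}\ \le\ n'\ <\ 2+\frac{\log\binom{k}{2}}{\log p},\qquad n'\le n,$$ and let $S$ be the set of all $\mathbb{F}_p$-subspaces of $\mathbb{F}$ of dimension $n'$. If $\mathbb{E}(g)>8p^{-1/2}k^{-1}$, then when $t\in\mathbb{F}$ and $W\in S$ are chosen independently and uniformly at random, $$\sum_{m\in t+W}g(m)\ \ge\ \mathbb{E}(g)\,|W|/2$$ holds with probability exceeding $3/4$.
   Context: $\mathbb{E}(g)=F^{-1}\sum_{m\in\mathbb{F}}g(m)$. *)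

theory Defs
  imports Complex_Main "HOL-Library.Cardinality" "HOL-Computational_Algebra.Primes"
begin

definition expect :: "('a::finite \<Rightarrow> real) \<Rightarrow> real" where
  "expect g = (\<Sum>m\<in>UNIV. g m) / real CARD('a)"

text \<open>F_p-subspace of a field of characteristic p: contains 0, closed under
  addition and under multiplication by the scalars of the prime field
  (i.e. by of_nat c).\<close>
definition prime_subspace :: "'a::field set \<Rightarrow> bool" where
  "prime_subspace W \<longleftrightarrow> 0 \<in> W \<and> (\<forall>x\<in>W. \<forall>y\<in>W. x + y \<in> W)
      \<and> (\<forall>c::nat. \<forall>x\<in>W. of_nat c * x \<in> W)"

text \<open>The set of F_p-subspaces of dimension d (a finite F_p-space has
  dimension d iff it has p^d elements).\<close>
definition subspaces_dim :: "nat \<Rightarrow> nat \<Rightarrow> 'a::{field,finite} set set" where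
  "subspaces_dim p d = {W. prime_subspace W \<and> card W = p ^ d}"

definition translate :: "'a::plus \<Rightarrow> 'a set \<Rightarrow> 'a set" where
  "translate t W = (\<lambda>w. t + w) ` W"

end

theory Submission
  imports Defs "HOL-Number_Theory.Residues"
begin

text \<open>
  Put \<open>X t W = (\<Sum>x\<in>W. g (t + x))\<close> and \<open>a = |W| E(g)\<close>; over all pairs \<open>(t, W)\<close> the
  mean of \<open>X\<close> is \<open>a\<close>. Its second moment is a sum of autocorrelations
  \<open>\<Sum>u. g u * g (u + d)\<close> over \<open>d \<in> W\<close>. Multiplication by a nonzero field element permutes
  the subspaces of a given dimension and acts transitively on the nonzero elements, so every
  \<open>d \<noteq> 0\<close> lies in the same number of them. This pairwise uniformity bounds the total
  variance by \<open>|S| |W| \<Sum>g = |S| F a\<close> (using \<open>g \<le> 1\<close>). A pair with \<open>X < a/2\<close> deviates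
  from the mean by at least \<open>a/2\<close>, so by Chebyshev there are at most \<open>4 |S| F / a\<close> of them,
  fewer than a quarter of all pairs once \<open>a > 16\<close>. Finally the hypotheses on \<open>n'\<close> and
  \<open>E(g)\<close> give \<open>a = p ^ n' E(g) > 4 sqrt p (k - 1) \<ge> 2 sqrt p k > 16\<close>.
\<close>

section \<open>Subspaces of a finite field over its prime field\<close>

lemma prime_CHAR_finite: "prime CHAR('a::{idom,finite})"
  using finite_imp_CHAR_pos[where 'a='a] by (intro prime_CHAR_semidom) simp

lemma prime_subspace_uminus:
  fixes W :: "'a::{field,finite} set"
  assumes "prime_subspace W" "x \<in> W"
  shows "-x \<in> W"
proof -
  have "of_nat (CHAR('a) - 1) + 1 = (of_nat CHAR('a) :: 'a)"
    using finite_imp_CHAR_pos[where 'a='a] by (simp add: of_nat_diff)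
  hence "(of_nat (CHAR('a) - 1) + 1) * x = 0"
    by simp
  hence "of_nat (CHAR('a) - 1) * x = -x"
    by (simp add: distrib_right eq_neg_iff_add_eq_0)
  with assms show ?thesis
    unfolding prime_subspace_def by metis
qed

lemma prime_subspace_diff:
  fixes W :: "'a::{field,finite} set"
  assumes "prime_subspace W" "x \<in> W" "y \<in> W"
  shows "x - y \<in> W"
  using assms prime_subspace_uminus[OF assms(1,3)]
  unfolding prime_subspace_def diff_conv_add_uminus by blast

lemma prime_subspace_image_mult:
  fixes W :: "'a::field set"
  assumes "prime_subspace W"
  shows "prime_subspace ((*) a ` W)"
  using assms unfolding prime_subspace_def
  by (auto simp: image_iff distrib_left[symmetric] mult.left_commute[of _ a])

lemma prime_subspace_of_nat_mult_memD:
  fixes H :: "'a::{field,finite} set"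
  assumes H: "prime_subspace H" and jx: "of_nat j * x \<in> H" and j: "\<not> CHAR('a) dvd j"
  shows "x \<in> H"
proof -
  from j have "coprime j CHAR('a)"
    by (metis prime_CHAR_finite prime_imp_coprime coprime_commute)
  then obtain a where "[j * a = 1] (mod CHAR('a))"
    using cong_solve_coprime_nat by auto
  hence "of_nat (j * a) = (1 :: 'a)"
    using of_nat_eq_iff_cong_CHAR[where 'a='a, of "j * a" 1] by simp
  hence "of_nat a * (of_nat j * x) = x"
    by (metis mult.assoc mult.commute mult_1 of_nat_mult)
  with H jx show ?thesis
    unfolding prime_subspace_def by metis
qed

definition adjoin :: "'a::semiring_1 set \<Rightarrow> 'a \<Rightarrow> 'a set" where
  "adjoin H x = {h + of_nat i * x | h i. h \<in> H}"

lemma prime_subspace_adjoin: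
  fixes H :: "'a::field set"
  assumes H: "prime_subspace H"
  shows "prime_subspace (adjoin H x)"
  unfolding prime_subspace_def
proof (intro conjI ballI allI)
  show "0 \<in> adjoin H x"
    using H unfolding adjoin_def prime_subspace_def by (auto intro!: exI[of _ 0])
next
  fix y z assume "y \<in> adjoin H x" "z \<in> adjoin H x"
  then obtain h i h' i' where "y = h + of_nat i * x" "z = h' + of_nat i' * x" "h \<in> H" "h' \<in> H"
    unfolding adjoin_def by blast
  moreover from this have "y + z = (h + h') + of_nat (i + i') * x"
    by (simp add: algebra_simps)
  ultimately show "y + z \<in> adjoin H x"
    using H unfolding adjoin_def prime_subspace_def by blast
next
  fix c :: nat and y assume "y \<in> adjoin H x"
  then obtain h i where "y = h + of_nat i * x" "h \<in> H"
    unfolding adjoin_def by blast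
  moreover from this have "of_nat c * y = of_nat c * h + of_nat (c * i) * x"
    by (simp add: algebra_simps)
  ultimately show "of_nat c * y \<in> adjoin H x"
    using H unfolding adjoin_def prime_subspace_def by blast
qed

lemma adjoin_eq_image:
  fixes H :: "'a::{field,finite} set"
  shows "adjoin H x = (\<lambda>(h, i). h + of_nat i * x) ` (H \<times> {..<CHAR('a)})"
proof (intro equalityI subsetI)
  fix y assume "y \<in> adjoin H x"
  then obtain h i where "y = h + of_nat i * x" "h \<in> H"
    unfolding adjoin_def by blast
  moreover have "(of_nat (i mod CHAR('a)) :: 'a) = of_nat i"
    unfolding of_nat_eq_iff_cong_CHAR by (simp add: cong_def)
  ultimately show "y \<in> (\<lambda>(h, i). h + of_nat i * x) ` (H \<times> {..<CHAR('a)})"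
    using finite_imp_CHAR_pos[where 'a='a] by (auto intro!: image_eqI[of _ _ "(h, i mod CHAR('a))"])
qed (auto simp: adjoin_def)

lemma inj_on_adjoin:
  fixes H :: "'a::{field,finite} set"
  assumes H: "prime_subspace H" and x: "x \<notin> H"
  shows "inj_on (\<lambda>(h, i). h + of_nat i * x) (H \<times> {..<CHAR('a)})"
proof -
  have index_eq: "i = i'"
    if eq: "h + of_nat i * x = h' + of_nat i' * x" and "h \<in> H" "h' \<in> H" "i' \<le> i" "i < CHAR('a)"
    for h h' i i'
  proof (rule ccontr)
    assume "i \<noteq> i'"
    have "of_nat (i - i') * x = h' - h"
      using eq \<open>i' \<le> i\<close> by (simp add: of_nat_diff algebra_simps)
    hence "of_nat (i - i') * x \<in> H"
      using prime_subspace_diff[OF H \<open>h' \<in> H\<close> \<open>h \<in> H\<close>] by simp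
    moreover have "\<not> CHAR('a) dvd (i - i')"
      using \<open>i \<noteq> i'\<close> that(4,5) by (auto dest: dvd_imp_le)
    ultimately show False
      using prime_subspace_of_nat_mult_memD[OF H] x by blast
  qed
  show ?thesis
  proof (rule inj_onI, clarsimp)
    fix h i h' i'
    assume "h \<in> H" "i < CHAR('a)" "h' \<in> H" "i' < CHAR('a)"
      and eq: "h + of_nat i * x = h' + of_nat i' * x"
    then have "i = i'"
      using index_eq[OF eq] index_eq[OF eq[symmetric]] by (metis nat_le_linear)
    with eq show "h = h' \<and> i = i'" by simp
  qed
qed

lemma card_adjoin:
  fixes H :: "'a::{field,finite} set"
  assumes "prime_subspace H" "x \<notin> H"
  shows "card (adjoin H x) = card H * CHAR('a)"
  using card_image[OF inj_on_adjoin[OF assms]] by (simp add: adjoin_eq_image card_cartesian_product)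

lemma exists_prime_subspace_card_CHAR_power:
  assumes "CHAR('a::{field,finite}) ^ j \<le> CARD('a)"
  shows "\<exists>H :: 'a set. prime_subspace H \<and> card H = CHAR('a) ^ j"
  using assms
proof (induction j)
  case 0
  have "prime_subspace {0 :: 'a}"
    by (simp add: prime_subspace_def)
  then show ?case by force
next
  case (Suc j)
  have "CHAR('a) > 1"
    using prime_CHAR_finite[where 'a='a] prime_gt_1_nat by blast
  hence less: "CHAR('a) ^ j < CHAR('a) ^ Suc j"
    by simp
  with Suc.prems have "CHAR('a) ^ j \<le> CARD('a)"
    by linarith
  with Suc.IH obtain H :: "'a set" where H: "prime_subspace H" "card H = CHAR('a) ^ j"
    by blast
  have "H \<noteq> UNIV"
    using H(2) less Suc.prems by auto
  then obtain x where "x \<notin> H" by blast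
  with H show ?case
    by (metis prime_subspace_adjoin card_adjoin power_Suc2)
qed

lemma CHAR_eq_if_CARD_eq_prime_power:
  assumes "prime p" "CARD('a::{field,finite}) = p ^ n"
  shows "CHAR('a) = p"
proof -
  have "CHAR('a) dvd p ^ n"
    using CHAR_dvd_CARD[where 'a='a] assms(2) by simp
  then show ?thesis
    using assms(1) prime_CHAR_finite[where 'a='a] prime_dvd_power primes_dvd_imp_eq by blast
qed

lemma subspaces_dim_nonempty:
  assumes "prime p" "CARD('a::{field,finite}) = p ^ n" "d \<le> n"
  shows "subspaces_dim p d \<noteq> ({} :: 'a set set)"
proof -
  have "p ^ d \<le> CARD('a)"
    using assms by (metis power_increasing prime_ge_1_nat)
  then show ?thesis
    using exists_prime_subspace_card_CHAR_power[where 'a='a and j=d]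
      CHAR_eq_if_CARD_eq_prime_power[OF assms(1,2)]
    by (auto simp: subspaces_dim_def)
qed

lemma image_mult_mem_subspaces_dim:
  fixes W :: "'a::{field,finite} set"
  assumes "W \<in> subspaces_dim p d" "a \<noteq> 0"
  shows "(*) a ` W \<in> subspaces_dim p d"
  using assms prime_subspace_image_mult[of W a] card_image[of "(*) a" W]
  by (simp add: subspaces_dim_def inj_on_def)

lemma card_subspaces_dim_containing:
  fixes d :: "'a::{field,finite}"
  assumes "d \<noteq> 0"
  shows "card {W \<in> subspaces_dim p m. d \<in> W} = card {W \<in> subspaces_dim p m. (1::'a) \<in> W}"
proof (rule bij_betw_same_card, rule bij_betw_byWitness)
  show "\<forall>W\<in>{W \<in> subspaces_dim p m. d \<in> W}. (*) d ` (*) (inverse d) ` W = W"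
       "\<forall>W\<in>{W \<in> subspaces_dim p m. 1 \<in> W}. (*) (inverse d) ` (*) d ` W = W"
    using assms by (auto simp: image_image mult.assoc[symmetric])
  show "(\<lambda>W. (*) (inverse d) ` W) ` {W \<in> subspaces_dim p m. d \<in> W} \<subseteq> {W \<in> subspaces_dim p m. 1 \<in> W}"
       "(\<lambda>W. (*) d ` W) ` {W \<in> subspaces_dim p m. 1 \<in> W} \<subseteq> {W \<in> subspaces_dim p m. d \<in> W}"
    using assms image_mult_mem_subspaces_dim by (force simp: image_iff)+
qed

section \<open>Moments of sums over translates of subspaces\<close>

lemma sum_UNIV_add_right:
  fixes f :: "'a::{group_add,finite} \<Rightarrow> 'b::comm_monoid_add"
  shows "(\<Sum>t\<in>UNIV. f (t + a)) = sum f UNIV"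
  by (rule sum.reindex_bij_witness[of _ "\<lambda>t. t - a" "\<lambda>t. t + a"]) auto

lemma sum_translates:
  fixes g :: "'a::{group_add,finite} \<Rightarrow> real"
  shows "(\<Sum>t\<in>UNIV. \<Sum>x\<in>W. g (t + x)) = real (card W) * sum g UNIV"
  by (subst sum.swap) (simp add: sum_UNIV_add_right)

definition autocorr :: "('a::{plus,finite} \<Rightarrow> real) \<Rightarrow> 'a \<Rightarrow> real" where
  "autocorr g d = (\<Sum>u\<in>UNIV. g u * g (u + d))"

lemma sum_autocorr:
  fixes g :: "'a::{ab_group_add,finite} \<Rightarrow> real"
  shows "(\<Sum>d\<in>UNIV. autocorr g d) = (sum g UNIV)\<^sup>2"
proof -
  have "(\<Sum>d\<in>UNIV. autocorr g d) = (\<Sum>u\<in>UNIV. g u * (\<Sum>d\<in>UNIV. g (d + u)))"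
    unfolding autocorr_def by (subst sum.swap) (simp add: sum_distrib_left add.commute)
  also have "\<dots> = (\<Sum>u\<in>UNIV. g u * sum g UNIV)"
    by (simp add: sum_UNIV_add_right)
  finally show ?thesis
    by (simp add: power2_eq_square sum_distrib_right)
qed

lemma autocorr_zero_le_sum:
  fixes g :: "'a::{monoid_add,finite} \<Rightarrow> real"
  assumes "\<And>x. 0 \<le> g x" "\<And>x. g x \<le> 1"
  shows "autocorr g 0 \<le> sum g UNIV"
  unfolding autocorr_def using assms by (simp add: sum_mono mult_left_le_one_le)

lemma sum_translates_squared:
  fixes g :: "'a::{field,finite} \<Rightarrow> real"
  assumes W: "prime_subspace W"
  shows "(\<Sum>t\<in>UNIV. (\<Sum>x\<in>W. g (t + x))\<^sup>2) = real (card W) * (\<Sum>d\<in>W. autocorr g d)"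
proof -
  have "(\<Sum>t\<in>UNIV. (\<Sum>x\<in>W. g (t + x))\<^sup>2) = (\<Sum>x\<in>W. \<Sum>y\<in>W. \<Sum>t\<in>UNIV. g (t + x) * g (t + y))"
    by (simp add: power2_eq_square sum_product sum.swap[where A = UNIV])
  also have "\<dots> = (\<Sum>x\<in>W. \<Sum>y\<in>W. autocorr g (y - x))"
  proof (intro sum.cong refl)
    fix x y
    show "(\<Sum>t\<in>UNIV. g (t + x) * g (t + y)) = autocorr g (y - x)"
      unfolding autocorr_def using sum_UNIV_add_right[of "\<lambda>u. g u * g (u + (y - x))" x]
      by (simp add: algebra_simps)
  qed
  also have "\<dots> = (\<Sum>x\<in>W. \<Sum>d\<in>W. autocorr g d)"
  proof (rule sum.cong[OF refl])
    fix x assume "x \<in> W"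
    show "(\<Sum>y\<in>W. autocorr g (y - x)) = (\<Sum>d\<in>W. autocorr g d)"
      by (rule sum.reindex_bij_witness[of _ "\<lambda>d. d + x" "\<lambda>y. y - x"])
        (use W \<open>x \<in> W\<close> prime_subspace_diff in \<open>auto simp: prime_subspace_def\<close>)
  qed
  finally show ?thesis by simp
qed

lemma sum_sum_mem_eq_sum_card:
  fixes h :: "'a::finite \<Rightarrow> real" and S :: "'a set set"
  shows "(\<Sum>W\<in>S. \<Sum>d\<in>W. h d) = (\<Sum>d\<in>UNIV. h d * real (card {W\<in>S. d \<in> W}))"
proof -
  have "(\<Sum>W\<in>S. \<Sum>d\<in>W. h d) = (\<Sum>W\<in>S. \<Sum>d\<in>UNIV. if d \<in> W then h d else 0)"
    by (rule sum.cong[OF refl]) (use sum.inter_restrict[of UNIV h] in simp)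
  also have "\<dots> = (\<Sum>d\<in>UNIV. \<Sum>W\<in>S. if d \<in> W then h d else 0)"
    by (rule sum.swap)
  also have "\<dots> = (\<Sum>d\<in>UNIV. h d * real (card {W\<in>S. d \<in> W}))"
    by (rule sum.cong[OF refl]) (use sum.inter_filter[of S "\<lambda>_. h _"] in \<open>simp add: mult.commute\<close>)
  finally show ?thesis .
qed

lemma sum_sum_mem_eq_if_uniform:
  fixes h :: "'a::{zero,finite} \<Rightarrow> real" and S :: "'a set set"
  assumes "\<And>W. W \<in> S \<Longrightarrow> 0 \<in> W" and "\<And>d. d \<noteq> 0 \<Longrightarrow> card {W\<in>S. d \<in> W} = c"
  shows "(\<Sum>W\<in>S. \<Sum>d\<in>W. h d) = real (card S) * h 0 + real c * (sum h UNIV - h 0)"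
proof -
  have "{W\<in>S. 0 \<in> W} = S"
    using assms(1) by blast
  have "(\<Sum>W\<in>S. \<Sum>d\<in>W. h d) = h 0 * real (card S) + (\<Sum>d\<in>UNIV - {0}. h d * real c)"
    unfolding sum_sum_mem_eq_sum_card using assms(2)
    by (simp add: sum.remove[of UNIV 0] \<open>{W\<in>S. 0 \<in> W} = S\<close>)
  also have "(\<Sum>d\<in>UNIV - {0}. h d * real c) = real c * (sum h UNIV - h 0)"
    by (simp add: sum_diff1 sum_distrib_left right_diff_distrib mult.commute)
  finally show ?thesis by simp
qed

lemma card_mult_CARD_minus_one_eq_if_uniform:
  fixes S :: "'a::{zero,finite} set set"
  assumes "\<And>W. W \<in> S \<Longrightarrow> 0 \<in> W" "\<And>W. W \<in> S \<Longrightarrow> card W = w"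
    and "\<And>d. d \<noteq> 0 \<Longrightarrow> card {W\<in>S. d \<in> W} = c"
  shows "real c * (real CARD('a) - 1) = real (card S) * (real w - 1)"
  using sum_sum_mem_eq_if_uniform[of S c "\<lambda>_. 1", OF assms(1,3)] assms(2)
  by (simp add: algebra_simps)

lemma sum_sum_translates_squared_eq_if_uniform:
  fixes g :: "'a::{field,finite} \<Rightarrow> real" and S :: "'a set set"
  assumes "\<And>W. W \<in> S \<Longrightarrow> prime_subspace W" "\<And>W. W \<in> S \<Longrightarrow> card W = w"
    and "\<And>d. d \<noteq> 0 \<Longrightarrow> card {W\<in>S. d \<in> W} = c"
  shows "(\<Sum>W\<in>S. \<Sum>t\<in>UNIV. (\<Sum>x\<in>W. g (t + x))\<^sup>2)
           = real w * (real (card S) * autocorr g 0 + real c * ((sum g UNIV)\<^sup>2 - autocorr g 0))"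
proof -
  have "(\<Sum>W\<in>S. \<Sum>t\<in>UNIV. (\<Sum>x\<in>W. g (t + x))\<^sup>2) = real w * (\<Sum>W\<in>S. \<Sum>d\<in>W. autocorr g d)"
    using assms(1,2) by (simp add: sum_translates_squared sum_distrib_left)
  also have "\<dots> = real w * (real (card S) * autocorr g 0 + real c * ((sum g UNIV)\<^sup>2 - autocorr g 0))"
    using assms(1) sum_sum_mem_eq_if_uniform[of S c "autocorr g", OF _ assms(3)]
    by (simp add: sum_autocorr prime_subspace_def)
  finally show ?thesis .
qed

lemma sum_sq_dev_translates_le:
  fixes g :: "'a::{field,finite} \<Rightarrow> real" and S :: "'a set set"
  assumes g: "\<And>x. 0 \<le> g x" "\<And>x. g x \<le> 1"
    and S: "\<And>W. W \<in> S \<Longrightarrow> prime_subspace W" "\<And>W. W \<in> S \<Longrightarrow> card W = w" "S \<noteq> {}"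
    and c: "\<And>d. d \<noteq> 0 \<Longrightarrow> card {W\<in>S. d \<in> W} = c"
  shows "(\<Sum>W\<in>S. \<Sum>t\<in>UNIV. ((\<Sum>x\<in>W. g (t + x)) - real w * expect g)\<^sup>2)
           \<le> real (card S) * real w * sum g UNIV"
proof -
  define N F s Q where "N = real (card S)" and "F = real CARD('a)"
    and "s = sum g UNIV" and "Q = autocorr g 0"
  define X where "X t W = (\<Sum>x\<in>W. g (t + x))" for t W
  define a where "a = real w * s / F"
  obtain W0 where "W0 \<in> S" using S(3) by blast
  hence "0 \<in> W0" "card W0 = w"
    using S(1,2) by (auto simp: prime_subspace_def)
  hence w: "1 \<le> real w" "real w \<le> F"
    using card_mono[of UNIV W0] by (auto simp: F_def Suc_le_eq card_gt_0_iff)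
  have "card {0, 1 :: 'a} \<le> CARD('a)"
    by (rule card_mono) auto
  hence F2: "2 \<le> F" by (simp add: F_def)
  have Q: "0 \<le> Q" "Q \<le> s"
    using g autocorr_zero_le_sum[of g] by (auto simp: Q_def s_def autocorr_def sum_nonneg)
  have "(\<Sum>W\<in>S. \<Sum>t\<in>UNIV. (X t W - a)\<^sup>2)
          = (\<Sum>W\<in>S. \<Sum>t\<in>UNIV. (X t W)\<^sup>2) - 2 * a * (\<Sum>W\<in>S. \<Sum>t\<in>UNIV. X t W) + N * F * a\<^sup>2"
    by (simp add: power2_diff sum.distrib sum_subtractf sum_distrib_left N_def F_def mult_ac)
  also have "\<dots> = real w * N * ((F - real w) * (Q - s\<^sup>2 / F)) / (F - 1)"
  proof -
    have "F \<noteq> 0" "F - 1 \<noteq> 0"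
      using F2 by auto
    moreover have c_eq: "real c = N * (real w - 1) / (F - 1)"
      using card_mult_CARD_minus_one_eq_if_uniform[of S w c] S(1,2) c F2
      by (simp add: N_def F_def prime_subspace_def field_simps)
    moreover have first: "(\<Sum>W\<in>S. \<Sum>t\<in>UNIV. X t W) = N * real w * s"
      using S(2) by (simp add: X_def sum_translates N_def s_def)
    moreover have second: "(\<Sum>W\<in>S. \<Sum>t\<in>UNIV. (X t W)\<^sup>2) = real w * (N * Q + real c * (s\<^sup>2 - Q))"
      using sum_sum_translates_squared_eq_if_uniform[of S w c g, OF S(1,2) c]
      by (simp add: X_def N_def Q_def s_def)
    ultimately show ?thesis
      unfolding first second c_eq a_def by (simp add: field_simps power2_eq_square)
  qed
  also have "\<dots> \<le> real w * N * ((F - 1) * s) / (F - 1)"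
  proof -
    have "(F - real w) * (Q - s\<^sup>2 / F) \<le> (F - real w) * Q"
      using w F2 by (intro mult_left_mono) auto
    also have "\<dots> \<le> (F - 1) * s"
      using w Q by (intro mult_mono) auto
    finally show ?thesis
      using F2 by (intro divide_right_mono mult_left_mono) (auto simp: N_def)
  qed
  also have "\<dots> = N * real w * s"
    using F2 by simp
  finally show ?thesis
    by (simp add: X_def a_def N_def s_def F_def expect_def)
qed

lemma card_less_half_mult_le_sum_sq_dev:
  fixes f :: "'b \<Rightarrow> real"
  assumes "finite P" "0 \<le> a"
  shows "real (card {x\<in>P. f x < a / 2}) * (a / 2)\<^sup>2 \<le> (\<Sum>x\<in>P. (f x - a)\<^sup>2)"
proof -
  have "real (card {x\<in>P. f x < a / 2}) * (a / 2)\<^sup>2 \<le> (\<Sum>x\<in>{x\<in>P. f x < a / 2}. (f x - a)\<^sup>2)"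
  proof (rule sum_bounded_below)
    fix x assume "x \<in> {x\<in>P. f x < a / 2}"
    hence "a / 2 \<le> \<bar>f x - a\<bar>" by (auto simp: abs_if)
    then show "(a / 2)\<^sup>2 \<le> (f x - a)\<^sup>2"
      using assms(2) by (simp flip: abs_le_square_iff)
  qed
  also have "\<dots> \<le> (\<Sum>x\<in>P. (f x - a)\<^sup>2)"
    using assms(1) by (intro sum_mono2) auto
  finally show ?thesis .
qed

lemma card_translates_below_half_mean_less:
  fixes g :: "'a::{field,finite} \<Rightarrow> real" and S :: "'a set set"
  assumes g: "\<And>x. 0 \<le> g x" "\<And>x. g x \<le> 1"
    and S: "\<And>W. W \<in> S \<Longrightarrow> prime_subspace W" "\<And>W. W \<in> S \<Longrightarrow> card W = w" "S \<noteq> {}"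
    and c: "\<And>d. d \<noteq> 0 \<Longrightarrow> card {W\<in>S. d \<in> W} = c"
    and large: "16 < real w * expect g"
  shows "real (card {(t, W). W \<in> S \<and> (\<Sum>x\<in>W. g (t + x)) < real w * expect g / 2})
           < real CARD('a) * real (card S) / 4"
proof -
  define a where "a = real w * expect g"
  define X where "X = (\<lambda>(t, W). \<Sum>x\<in>W. g (t + x))"
  define B where "B = {(t, W). W \<in> S \<and> (\<Sum>x\<in>W. g (t + x)) < a / 2}"
  have pos: "0 < real CARD('a) * real (card S)"
    using S(3) by (simp add: card_gt_0_iff)
  have "B = {x \<in> UNIV \<times> S. X x < a / 2}"
    by (auto simp: B_def X_def)
  hence "real (card B) * (a / 2)\<^sup>2 \<le> (\<Sum>x\<in>UNIV \<times> S. (X x - a)\<^sup>2)"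
    using card_less_half_mult_le_sum_sq_dev[of "UNIV \<times> S" a X] large by (simp add: a_def)
  also have "\<dots> = (\<Sum>W\<in>S. \<Sum>t\<in>UNIV. ((\<Sum>x\<in>W. g (t + x)) - a)\<^sup>2)"
    by (simp add: X_def sum.cartesian_product' sum.swap[where A = UNIV])
  also have "\<dots> \<le> real (card S) * real w * sum g UNIV"
    unfolding a_def by (rule sum_sq_dev_translates_le[OF g S c])
  also have "\<dots> = real CARD('a) * real (card S) * a"
    by (simp add: a_def expect_def)
  finally have "(real (card B) * a) * a \<le> (4 * (real CARD('a) * real (card S))) * a"
    by (simp add: power2_eq_square field_simps)
  moreover have "16 < a"
    using large by (simp add: a_def)
  ultimately have le: "real (card B) * a \<le> 4 * (real CARD('a) * real (card S))"
    by simp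
  have "real (card B) * 16 < 4 * (real CARD('a) * real (card S))"
  proof (cases "card B = 0")
    case True
    with pos show ?thesis by simp
  next
    case False
    with \<open>16 < a\<close> have "real (card B) * 16 < real (card B) * a"
      by (intro mult_strict_left_mono) auto
    with le show ?thesis by linarith
  qed
  then show ?thesis
    unfolding B_def a_def by simp
qed

lemma card_translates_ge_half_mean_gt:
  fixes g :: "'a::{field,finite} \<Rightarrow> real" and S :: "'a set set"
  assumes "\<And>x. 0 \<le> g x" "\<And>x. g x \<le> 1"
    and "\<And>W. W \<in> S \<Longrightarrow> prime_subspace W" "\<And>W. W \<in> S \<Longrightarrow> card W = w" "S \<noteq> {}"
    and "\<And>d. d \<noteq> 0 \<Longrightarrow> card {W\<in>S. d \<in> W} = c"
    and "16 < real w * expect g"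
  shows "3/4 * (real CARD('a) * real (card S))
           < real (card {(t, W). W \<in> S \<and> real w * expect g / 2 \<le> (\<Sum>x\<in>W. g (t + x))})"
proof -
  define B where "B = {(t, W). W \<in> S \<and> (\<Sum>x\<in>W. g (t + x)) < real w * expect g / 2}"
  have B: "B \<subseteq> UNIV \<times> S"
    by (auto simp: B_def)
  have "{(t, W). W \<in> S \<and> real w * expect g / 2 \<le> (\<Sum>x\<in>W. g (t + x))} = UNIV \<times> S - B"
    by (auto simp: B_def)
  moreover have "card (UNIV \<times> S - B) = CARD('a) * card S - card B" "card B \<le> CARD('a) * card S"
    using card_Diff_subset[OF _ B] card_mono[OF _ B] by (simp_all add: card_cartesian_product)
  ultimately show ?thesis
    using card_translates_below_half_mean_less[OF assms] by (simp add: B_def of_nat_diff)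
qed

lemma mult_choose_two_le_power:
  fixes p k n' :: nat
  assumes p: "1 < p" and k: "2 \<le> k"
    and n': "1 + ln (real (k choose 2)) / ln (real p) \<le> real n'"
  shows "real p * real (k choose 2) \<le> real p ^ n'"
proof -
  have C: "0 < real (k choose 2)"
    using k by simp
  have "ln (real (k choose 2)) / ln (real p) \<le> real n' - 1"
    using n' by linarith
  hence "ln (real (k choose 2)) \<le> (real n' - 1) * ln (real p)"
    using p by (simp add: pos_divide_le_eq)
  hence "ln (real p * real (k choose 2)) \<le> ln (real p ^ n')"
    using p C by (simp add: ln_mult ln_realpow algebra_simps)
  then show ?thesis
    using p C by simp
qed

lemma sixteen_less_power_mult:
  fixes p k n' :: nat and \<mu> :: real
  assumes p: "1 < p" and k: "2 \<le> k"
    and n': "1 + ln (real (k choose 2)) / ln (real p) \<le> real n'"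
    and \<mu>: "8 * real p powr (-1/2) / real k < \<mu>" "\<mu> \<le> 1"
  shows "16 < real p ^ n' * \<mu>"
proof -
  define r where "r = sqrt (real p)"
  have r: "0 < r" "r * r = real p"
    using p by (auto simp: r_def)
  have "real p powr (-1/2) = 1 / r"
    using p by (simp add: r_def powr_minus_divide powr_half_sqrt)
  with \<mu>(1) have "8 / (r * real k) < \<mu>"
    by simp
  hence \<mu>rk: "8 < \<mu> * (r * real k)"
    using r k by (simp add: divide_less_eq mult.commute)
  have rk_pos: "0 < r * real k"
    using r k by simp
  moreover from \<mu>rk have "0 < \<mu> * (r * real k)"
    by linarith
  ultimately have "0 < \<mu>"
    using zero_less_mult_pos2 by blast
  hence "\<mu> * (r * real k) \<le> r * real k"
    using \<mu>(2) rk_pos by (simp add: mult_left_le_one_le)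
  with \<mu>rk have rk: "8 < r * real k"
    by linarith
  have "even (k * (k - 1))"
    by auto
  hence "2 * (k choose 2) = k * (k - 1)"
    by (simp add: choose_two)
  hence "real (2 * (k choose 2)) = real (k * (k - 1))"
    by (rule arg_cong)
  hence choose: "2 * real (k choose 2) = real k * (real k - 1)"
    using k by (simp add: of_nat_diff)
  have "0 \<le> r * (real k - 2)"
    using r k by simp
  hence "16 < 4 * (r * (real k - 1))"
    using rk by (simp add: algebra_simps)
  also have "\<dots> = 8 * (r * (real k - 1)) / 2"
    by simp
  also have "\<dots> < (\<mu> * (r * real k)) * (r * (real k - 1)) / 2"
    using \<mu>rk r k by (intro divide_strict_right_mono mult_strict_right_mono) auto
  also have "\<dots> = \<mu> * (r * r) * (real k * (real k - 1)) / 2"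
    by (simp add: algebra_simps)
  also have "\<dots> = real p * real (k choose 2) * \<mu>"
    by (simp add: r(2) flip: choose)
  also have "\<dots> \<le> real p ^ n' * \<mu>"
    using mult_choose_two_le_power[OF p k n'] \<open>0 < \<mu>\<close> by (intro mult_right_mono) auto
  finally show ?thesis .
qed

theorem lemma2:
  fixes g :: "'a::{field,finite} \<Rightarrow> real"
    and p n k n' :: nat
  assumes "prime p" and "n \<ge> 1" and "CARD('a) = p ^ n"
    and "\<And>x. 0 \<le> g x \<and> g x \<le> 1"
    and "k \<ge> 2"
    and "1 + ln (real (k choose 2)) / ln (real p) \<le> real n'"
    and "real n' < 2 + ln (real (k choose 2)) / ln (real p)"
    and "n' \<le> n"
    and "expect g > 8 * real p powr (-1/2) / real k"
  shows "real (card {(t, W). W \<in> subspaces_dim p n' \<and>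
              (\<Sum>m\<in>translate t W. g m) \<ge> expect g * real (card W) / 2})
         / (real CARD('a) * real (card (subspaces_dim p n' :: 'a set set))) > 3/4"
proof -
  define S where "S = (subspaces_dim p n' :: 'a set set)"
  have g: "\<And>x. 0 \<le> g x" "\<And>x. g x \<le> 1"
    using assms(4) by auto
  have S: "\<And>W. W \<in> S \<Longrightarrow> prime_subspace W" "\<And>W. W \<in> S \<Longrightarrow> card W = p ^ n'" "S \<noteq> {}"
    using subspaces_dim_nonempty[OF assms(1,3,8)] by (auto simp: S_def subspaces_dim_def)
  have c: "\<And>d. d \<noteq> 0 \<Longrightarrow> card {W\<in>S. d \<in> W} = card {W\<in>S. (1::'a) \<in> W}"
    unfolding S_def by (rule card_subspaces_dim_containing)
  have "expect g \<le> 1"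
    using sum_mono[of UNIV g "\<lambda>_. 1"] g(2) by (simp add: expect_def)
  hence large: "16 < real (p ^ n') * expect g"
    using sixteen_less_power_mult[OF _ assms(5,6,9)] prime_gt_1_nat[OF assms(1)] by simp
  have "3/4 * (real CARD('a) * real (card S)) < real (card
          {(t, W). W \<in> S \<and> real (p ^ n') * expect g / 2 \<le> (\<Sum>x\<in>W. g (t + x))})"
    using g S c large by (rule card_translates_ge_half_mean_gt)
  moreover have "{(t, W). W \<in> subspaces_dim p n' \<and>
              (\<Sum>m\<in>translate t W. g m) \<ge> expect g * real (card W) / 2}
        = {(t, W). W \<in> S \<and> real (p ^ n') * expect g / 2 \<le> (\<Sum>x\<in>W. g (t + x))}"
    using S(2) by (auto simp: S_def translate_def sum.reindex mult.commute)
  moreover have "0 < real CARD('a) * real (card S)"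
    using S(3) by (simp add: card_gt_0_iff)
  ultimately show ?thesis
    by (simp add: S_def pos_less_divide_eq)
qed

end
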